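(* Let $n\in\mathbb{N}$ and let $x,y\in\{0,1\}^n$ with ${\sf dist}(x,y)=1$. Then ${\sf dist}({\sf signature}(x),{\sf signature}(y))\le 3$ (Hamming distance of strings over the alphabet $\{0,1,\sqcup\}$). Consequently, writing $C_x=\{c_k,c_{k+1},\dots,c_{n-k}\}$ and $C_y=\{c'_{k'},\dots,c'_{n-k'}\}$ for the chains containing $x$ and $y$ (with $|c_j|=j$ and $|c'_{j}|=j$), we have (1) $|k-k'|\le 1$, and (2) for all $j\in[k,n-k]$ and $j'\in[k',n-k']$, ${\sf dist}(c_j,c'_{j'})\le |j-j'|+6$.
   Context: ${\sf dist}$ is Hamming distance, $|z|$ the Hamming weight. Marking: for $x\in\{0,1\}^n$, regard each $1$ as an opening parenthesis and each $0$ as a closing parenthesis; a coordinate is marked if its symbol is matched in the standard parenthesis matching (equivalently: repeatedly pick a pair of coordinates $i<i'$ with $x_i=1$, $x_{i'}=0$ that are adjacent among the currently unmarked coordinates, mark both, and continue until no such pair remains; the resulting set of marked coordinates does not depend on the choices). The unmarked coordinates of $x$, read left to right, then form a string $0\cdots01\cdots1$. The signature ${\sf signature}(x)\in\{0,1,\sqcup\}^n$ has $i$-th entry $x_i$ if coordinate $i$ is marked and $\sqcup$ otherwise. The chain $C_x$ is the set of all $y\in\{0,1\}^n$ with ${\sf signature}(y)={\sf signature}(x)$; equivalently, all strings that agree with $x$ on its marked coordinates and whose restriction to the unmarked coordinates has the form $0\cdots01\cdots1$. If $x$ has $2k$ marked coordinates, $C_x=\{c_k,\dots,c_{n-k}\}$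 where $c_j$ is the unique element of weight $j$ (this is the de Bruijn–Tengbergen–Kruyswijk symmetric chain partition). *)

theory Defs
  imports Main
begin

text \<open>Binary strings of length n are lists of booleans: True = 1 (opening parenthesis),
False = 0 (closing parenthesis); coordinates are indexed 0..n-1.\<close>

definition hdist :: "'a list \<Rightarrow> 'a list \<Rightarrow> nat" where
  "hdist x y = card {i. i < length x \<and> i < length y \<and> x ! i \<noteq> y ! i}"

definition weight :: "bool list \<Rightarrow> nat" where
  "weight x = length (filter id x)"

text \<open>Standard parenthesis matching by a left-to-right scan with a stack of positions of
unmatched opening parentheses; returns the set of matched (marked) coordinates.\<close>
fun marks :: "nat list \<Rightarrow> nat \<Rightarrow> bool list \<Rightarrow> nat set" where
  "marks st i [] = {}"
| "marks st i (True # xs) = marks (i # st) (Suc i) xs"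
| "marks [] i (False # xs) = marks [] (Suc i) xs"
| "marks (j # st) i (False # xs) = {i, j} \<union> marks st (Suc i) xs"

definition marked :: "bool list \<Rightarrow> nat set" where
  "marked x = marks [] 0 x"

text \<open>Signature over the alphabet {0,1,blank}: Some b = the bit b, None = blank.\<close>
definition signature :: "bool list \<Rightarrow> bool option list" where
  "signature x = map (\<lambda>i. if i \<in> marked x then Some (x ! i) else None) [0..<length x]"

definition chain :: "bool list \<Rightarrow> bool list set" where
  "chain x = {y. length y = length x \<and> signature y = signature x}"

definition chain_k :: "bool list \<Rightarrow> nat" where
  "chain_k x = card (marked x) div 2"

definition chain_elem :: "bool list \<Rightarrow> nat \<Rightarrow> bool list" where
  "chain_elem x j = (THE c. c \<in> chain x \<and> weight c = j)"

end

(* Read 1 as +1 and 0 as -1 and let h be the height profile (the prefix sums). A 0 at q is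
   unmatched iff h(q) is a minimum of h on [0, q], a 1 at q is unmatched iff h(q) is a strict
   minimum of h on [q, n]. Flipping a 0 at p into a 1 raises h by 2 after p. Besides p, the
   matching can then only change at 0s after p and at 1s before p; along these the heights are
   strictly monotone and confined to two windows of total size 2 around the minima of h before
   and after p, so the signatures differ in at most three places. Hence |k - k'| <= 1, and two
   chain members, both of the form 0...01...1 on the common unmarked coordinates, differ there
   exactly by the difference of their numbers of 1s; counting weights gives the bound. *)

theory Submission
  imports Defs
begin

subsection \<open>Height profile and parenthesis matching\<close>

definition height :: "bool list \<Rightarrow> nat \<Rightarrow> int" where
  "height xs t = (\<Sum>s<t. if xs!s then 1 else -1)"

lemma height_0 [simp]: "height xs 0 = 0"
  by (simp add: height_def)

lemma height_Suc: "height xs (Suc t) = height xs t + (if xs!t then 1 else -1)"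
  by (simp add: height_def)

lemma height_Suc_open: "xs!t \<Longrightarrow> height xs (Suc t) = height xs t + 1"
  by (simp add: height_Suc)

lemma height_Suc_close: "\<not> xs!t \<Longrightarrow> height xs (Suc t) = height xs t - 1"
  by (simp add: height_Suc)

lemma height_Cons_Suc [simp]: "height (b#xs) (Suc t) = (if b then 1 else -1) + height xs t"
  unfolding height_def by (subst sum.lessThan_Suc_shift) simp

lemma height_eq_count:
  "height xs t = int (card {q. q < t \<and> xs!q}) - int (card {q. q < t \<and> \<not> xs!q})"
proof (induction t)
  case (Suc t)
  have "{q. q < Suc t \<and> xs!q} = {q. q < t \<and> xs!q} \<union> (if xs!t then {t} else {})"
    and "{q. q < Suc t \<and> \<not> xs!q} = {q. q < t \<and> \<not> xs!q} \<union> (if xs!t then {} else {t})"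
    by (auto simp: less_Suc_eq)
  then show ?case using Suc by (simp add: height_Suc card_insert_if)
qed simp

text \<open>Marking of position t by the scan of xs started with L pending opening parentheses: a 1
  is matched iff the height later returns to its level, a 0 iff the height was lower before or
  a pending parenthesis is available.\<close>

definition matched_in_scan :: "nat \<Rightarrow> bool list \<Rightarrow> nat \<Rightarrow> bool" where
  "matched_in_scan L xs t =
     (if xs!t then \<exists>t'. t < t' \<and> t' \<le> length xs \<and> height xs t' \<le> height xs t
      else (\<exists>t'\<le>t. height xs t' < height xs t) \<or> - int L < height xs t)"

definition matched_on_stack :: "nat list \<Rightarrow> bool list \<Rightarrow> nat \<Rightarrow> bool" where
  "matched_on_stack st xs q =
     (\<exists>r<length st. q = st!r \<and> (\<exists>t\<le>length xs. height xs t < - int r))"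

lemma ex_le_Suc_iff: "(\<exists>t\<le>Suc n. P t) \<longleftrightarrow> P 0 \<or> (\<exists>t\<le>n. P (Suc t))"
  by (metis Suc_le_mono le0 not0_implies_Suc)

lemma ex_between_Suc_iff:
  "(\<exists>t'. Suc t < t' \<and> t' \<le> Suc n \<and> P t') \<longleftrightarrow> (\<exists>s. t < s \<and> s \<le> n \<and> P (Suc s))"
  by (metis Suc_le_mono Suc_less_eq less_imp_Suc_add)

lemma matched_in_scan_open_Suc:
  "matched_in_scan L (True#xs) (Suc t) = matched_in_scan (Suc L) xs t"
  unfolding matched_in_scan_def by (auto simp: ex_le_Suc_iff ex_between_Suc_iff)

lemma matched_in_scan_open_0:
  "matched_in_scan L (True#xs) 0 \<longleftrightarrow> (\<exists>t\<le>length xs. height xs t < 0)"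
proof -
  have "(\<exists>t'. 0 < t' \<and> t' \<le> Suc (length xs) \<and> height (True#xs) t' \<le> 0)
      \<longleftrightarrow> (\<exists>s\<le>length xs. height (True#xs) (Suc s) \<le> 0)"
    by (metis Suc_le_mono gr0_implies_Suc zero_less_Suc)
  then show ?thesis
    unfolding matched_in_scan_def by auto force
qed

lemma matched_in_scan_close_Suc:
  "matched_in_scan L (False#xs) (Suc t) = matched_in_scan (L - 1) xs t"
  unfolding matched_in_scan_def by (auto simp: ex_le_Suc_iff ex_between_Suc_iff)

lemma matched_in_scan_close_0: "matched_in_scan L (False#xs) 0 \<longleftrightarrow> 0 < L"
  unfolding matched_in_scan_def by auto

lemma shift_range_iff:
  "(i \<le> q \<and> q < i + Suc n \<and> P (q - i))
     \<longleftrightarrow> q = i \<and> P 0 \<or> Suc i \<le> q \<and> q < Suc i + n \<and> P (Suc (q - Suc i))"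
  by (cases "q = i") (auto simp: Suc_diff_Suc)

lemma matched_on_stack_push:
  "matched_on_stack (i#st) xs q
     \<longleftrightarrow> q = i \<and> (\<exists>t\<le>length xs. height xs t < 0) \<or> matched_on_stack st (True#xs) q"
proof -
  have "(\<exists>t\<le>Suc (length xs). height (True#xs) t < - int r)
      \<longleftrightarrow> (\<exists>t\<le>length xs. height xs t < - int (Suc r))" for r
    unfolding ex_le_Suc_iff height_Cons_Suc by (auto; force)
  then show ?thesis
    unfolding matched_on_stack_def length_Cons Ex_less_Suc2 by simp
qed

lemma matched_on_stack_pop:
  "matched_on_stack (j#st) (False#xs) q \<longleftrightarrow> q = j \<or> matched_on_stack st xs q"
proof -
  have "(\<exists>t\<le>Suc (length xs). height (False#xs) t < - int (Suc r))
      \<longleftrightarrow> (\<exists>t\<le>length xs. height xs t < - int r)" for r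
    unfolding ex_le_Suc_iff height_Cons_Suc by (auto; force)
  moreover have "\<exists>t\<le>Suc (length xs). height (False#xs) t < 0"
    by (rule exI[of _ 1]) simp
  ultimately show ?thesis
    unfolding matched_on_stack_def length_Cons Ex_less_Suc2 by simp
qed

lemma mem_marks_iff:
  "q \<in> marks st i xs \<longleftrightarrow>
     (i \<le> q \<and> q < i + length xs \<and> matched_in_scan (length st) xs (q - i))
     \<or> matched_on_stack st xs q"
proof (induction st i xs arbitrary: q rule: marks.induct)
  case (1 st i)
  then show ?case by (simp add: matched_on_stack_def)
next
  case (2 st i xs)
  then show ?case
    unfolding marks.simps length_Cons shift_range_iff matched_on_stack_push
      matched_in_scan_open_Suc matched_in_scan_open_0 by auto
next
  case (3 i xs)
  then show ?case
    unfolding marks.simps length_Cons shift_range_iff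
      matched_in_scan_close_Suc matched_in_scan_close_0
    by (auto simp: matched_on_stack_def)
next
  case (4 j st i xs)
  then show ?case
    unfolding marks.simps length_Cons shift_range_iff matched_on_stack_pop
      matched_in_scan_close_Suc matched_in_scan_close_0 by auto
qed

definition unmatched_close :: "bool list \<Rightarrow> nat \<Rightarrow> bool" where
  "unmatched_close x q \<longleftrightarrow> q < length x \<and> \<not> x!q \<and> (\<forall>t\<le>q. height x q \<le> height x t)"

definition unmatched_open :: "bool list \<Rightarrow> nat \<Rightarrow> bool" where
  "unmatched_open x q \<longleftrightarrow> q < length x \<and> x!q \<and> (\<forall>t. q < t \<and> t \<le> length x \<longrightarrow> height x q < height x t)"

lemma marked_iff:
  "q \<in> marked x \<longleftrightarrow> q < length x \<and> \<not> unmatched_close x q \<and> \<not> unmatched_open x q"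
proof -
  have "q \<in> marked x \<longleftrightarrow> q < length x \<and> matched_in_scan 0 x q"
    unfolding marked_def mem_marks_iff by (simp add: matched_on_stack_def)
  moreover have "matched_in_scan 0 x q \<longleftrightarrow> \<not> unmatched_close x q \<and> \<not> unmatched_open x q"
    if "q < length x"
    using that unfolding matched_in_scan_def unmatched_close_def unmatched_open_def
    by (auto intro: exI[of _ 0])
  ultimately show ?thesis by blast
qed

lemma unmatched_close_iff: "unmatched_close x q \<longleftrightarrow> q < length x \<and> q \<notin> marked x \<and> \<not> x!q"
  using marked_iff[of q x] by (auto simp: unmatched_close_def unmatched_open_def)

lemma unmatched_open_iff: "unmatched_open x q \<longleftrightarrow> q < length x \<and> q \<notin> marked x \<and> x!q"
  using marked_iff[of q x] by (auto simp: unmatched_close_def unmatched_open_def)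

lemma marked_less_length: "q \<in> marked x \<Longrightarrow> q < length x"
  by (simp add: marked_iff)

lemma finite_marked [simp]: "finite (marked x)"
  by (rule finite_subset[of _ "{..<length x}"]) (auto dest: marked_less_length)

lemma unmarked_open_before_unmarked_open:
  assumes "u < v" "v < length x" "u \<notin> marked x" "v \<notin> marked x" "x!u"
  shows "x!v"
proof (rule ccontr)
  assume "\<not> x!v"
  then have "unmatched_close x v" and "unmatched_open x u"
    using assms by (auto simp: unmatched_close_iff unmatched_open_iff)
  then show False using assms(1,2) unfolding unmatched_close_def unmatched_open_def
    by (metis less_imp_le_nat not_le order.strict_trans2)
qed

subsection \<open>Counting marked coordinates\<close>

lemma card_less_Suc_filter:
  "card {u. u < Suc t \<and> P u} = card {u. u < t \<and> P u} + (if P t then 1 else 0)"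
proof -
  have "{u. u < Suc t \<and> P u} = {u. u < t \<and> P u} \<union> (if P t then {t} else {})"
    by (auto simp: less_Suc_eq)
  then show ?thesis by (simp add: card_insert_if)
qed

lemma card_between_filter:
  "t < n \<Longrightarrow> card {u. t \<le> u \<and> u < n \<and> P u}
     = card {u. Suc t \<le> u \<and> u < n \<and> P u} + (if P t then 1 else 0)"
proof -
  assume "t < n"
  then have "{u. t \<le> u \<and> u < n \<and> P u}
      = {u. Suc t \<le> u \<and> u < n \<and> P u} \<union> (if P t then {t} else {})"
    by (auto simp: Suc_le_eq le_less)
  then show ?thesis by (simp add: card_insert_if)
qed

lemma Min_height_prefix:
  "t \<le> length x \<Longrightarrow> Min (height x ` {..t}) = - int (card {u. u < t \<and> unmatched_close x u})"
proof (induction t)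
  case (Suc t)
  define M where "M = Min (height x ` {..t})"
  have "M \<in> height x ` {..t}" unfolding M_def by (rule Min_in) auto
  then obtain s where "s \<le> t" "height x s = M" by auto
  moreover have "M \<le> height x s" if "s \<le> t" for s using that by (simp add: M_def)
  moreover have "t < length x" using Suc.prems by simp
  ultimately have "min M (height x (Suc t)) = M - (if unmatched_close x t then 1 else 0)"
    by (cases "x!t") (force simp: unmatched_close_def height_Suc not_le)+
  moreover have "Min (height x ` {..Suc t}) = min M (height x (Suc t))"
    by (simp add: atMost_Suc M_def min.commute)
  ultimately show ?case using Suc by (simp add: M_def card_less_Suc_filter)
qed simp

lemma Min_height_suffix:
  "t \<le> length x \<Longrightarrow> Min (height x ` {t..length x})
     = height x (length x) - int (card {u. t \<le> u \<and> u < length x \<and> unmatched_open x u})"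
proof (induction t rule: inc_induct)
  case (step t)
  define M where "M = Min (height x ` {Suc t..length x})"
  have "M \<in> height x ` {Suc t..length x}" unfolding M_def using step(2) by (intro Min_in) auto
  then obtain s where "Suc t \<le> s" "s \<le> length x" "height x s = M" by auto
  moreover have "M \<le> height x s" if "Suc t \<le> s" "s \<le> length x" for s
    using that by (simp add: M_def)
  ultimately have "min (height x t) M = M - (if unmatched_open x t then 1 else 0)"
    using step(2) by (cases "x!t") (force simp: unmatched_open_def height_Suc not_less Suc_le_eq)+
  moreover have "{t..length x} = insert t {Suc t..length x}" using step(2) by auto
  then have "Min (height x ` {t..length x}) = min (height x t) M"
    using step(2) by (simp add: M_def)
  ultimately show ?case using step by (simp add: M_def card_between_filter)
qed simp

text \<open>The minimum of the height profile is minus the number of unmatched 0s and also the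
  final height minus the number of unmatched 1s.\<close>

lemma card_marked_eq: "card (marked x) = 2 * card {q \<in> marked x. x!q}"
proof -
  define n where "n = length x"
  define Cl where "Cl = {u. u < n \<and> unmatched_close x u}"
  define Op where "Op = {u. 0 \<le> u \<and> u < n \<and> unmatched_open x u}"
  have min_eq: "- int (card Cl) = height x n - int (card Op)"
    using Min_height_prefix[of n x] Min_height_suffix[of 0 x] atLeast0AtMost
    unfolding n_def Cl_def Op_def by simp
  have opens: "{q. q < n \<and> x!q} = {q \<in> marked x. x!q} \<union> Op"
    and closes: "{q. q < n \<and> \<not> x!q} = {q \<in> marked x. \<not> x!q} \<union> Cl"
    and marks: "marked x = {q \<in> marked x. x!q} \<union> {q \<in> marked x. \<not> x!q}"
    by (auto simp: n_def Op_def Cl_def unmatched_close_iff unmatched_open_iff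
        dest: marked_less_length)
  have "card {q. q < n \<and> x!q} = card {q \<in> marked x. x!q} + card Op"
    unfolding opens by (rule card_Un_disjoint) (auto simp: Op_def unmatched_open_iff)
  moreover have "card {q. q < n \<and> \<not> x!q} = card {q \<in> marked x. \<not> x!q} + card Cl"
    unfolding closes by (rule card_Un_disjoint) (auto simp: Cl_def unmatched_close_iff)
  moreover have "card (marked x) = card {q \<in> marked x. x!q} + card {q \<in> marked x. \<not> x!q}"
    unfolding arg_cong[OF marks, of card] by (rule card_Un_disjoint) auto
  ultimately show ?thesis using min_eq height_eq_count[of x n] by simp
qed

text \<open>If the height dropped to h(p) - 2 after p, the position just before the first such point
  would be an unmatched 0.\<close>

lemma height_after_last_unmatched_close:
  assumes close: "unmatched_close x p" and last: "\<And>q. p < q \<Longrightarrow> \<not> unmatched_close x q"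
    and "p < t" "t \<le> length x"
  shows "height x p - 1 \<le> height x t"
proof (rule ccontr)
  assume "\<not> height x p - 1 \<le> height x t"
  then obtain u where u: "p < u" "u \<le> length x" "height x u \<le> height x p - 2"
    and least: "\<And>s. s < u \<Longrightarrow> \<not> (p < s \<and> s \<le> length x \<and> height x s \<le> height x p - 2)"
    using assms(3,4) exists_least_iff[of "\<lambda>u. p < u \<and> u \<le> length x \<and> height x u \<le> height x p - 2"]
    by force
  have "\<not> x!p" and before_p: "\<And>s. s \<le> p \<Longrightarrow> height x p \<le> height x s"
    using close by (auto simp: unmatched_close_def)
  then have "u \<noteq> Suc p" using u by (auto simp: height_Suc_close)
  then obtain r where r: "u = Suc r" "p < r" using u(1) by (cases u) auto
  have "height x p - 2 < height x r" using least[of r] r u by auto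
  then have "\<not> x!r" and height_r: "height x r = height x p - 1"
    using u(3) r(1) height_Suc[of x r] by (auto split: if_splits)
  have "unmatched_close x r"
    unfolding unmatched_close_def
  proof (intro conjI allI impI)
    fix s assume "s \<le> r"
    show "height x r \<le> height x s"
    proof (cases "s \<le> p")
      case True
      then show ?thesis using before_p height_r by force
    next
      case False
      then show ?thesis using least[of s] \<open>s \<le> r\<close> r u height_r by auto
    qed
  qed (use r u \<open>\<not> x!r\<close> in auto)
  then show False using last r by blast
qed

lemma card_le_of_inj_into_interval:
  assumes "inj_on f S" "f ` S \<subseteq> {a..b::int}"
  shows "int (card S) \<le> max 0 (b - a + 1)"
proof -
  have "card S \<le> card {a..b}"
    using assms by (metis card_image card_mono finite_atLeastAtMost_int)
  then show ?thesis by simp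
qed

definition sig_diffs :: "bool list \<Rightarrow> bool list \<Rightarrow> nat set" where
  "sig_diffs x y = {q. q < length x \<and> signature x ! q \<noteq> signature y ! q}"

lemma nth_signature:
  "q < length x \<Longrightarrow> signature x ! q = (if q \<in> marked x then Some (x!q) else None)"
  by (simp add: signature_def)

subsection \<open>Flipping one coordinate from 0 to 1\<close>

locale bit_flip =
  fixes x y :: "bool list" and p n :: nat
  assumes length_x: "length x = n" and length_y: "length y = n" and p_less: "p < n"
    and x_p: "\<not> x!p" and y_p: "y!p"
    and same_elsewhere: "\<And>q. q < n \<Longrightarrow> q \<noteq> p \<Longrightarrow> x!q = y!q"
begin

lemma height_flip: "t \<le> n \<Longrightarrow> height y t = height x t + (if p < t then 2 else 0)"
proof (induction t)
  case (Suc t)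
  then show ?case
    using x_p y_p same_elsewhere[of t] by (cases "t = p") (auto simp: height_Suc)
qed simp

lemma height_flip_le: "t \<le> p \<Longrightarrow> height y t = height x t"
  using height_flip p_less by simp

lemma height_flip_gt: "p < t \<Longrightarrow> t \<le> n \<Longrightarrow> height y t = height x t + 2"
  using height_flip by simp

lemma marked_flip_close_before:
  assumes "q < p" "\<not> x!q"
  shows "q \<in> marked x \<longleftrightarrow> q \<in> marked y"
proof -
  have "\<not> y!q" using assms same_elsewhere[of q] p_less by auto
  with assms have "unmatched_close x q \<longleftrightarrow> unmatched_close y q"
    unfolding unmatched_close_def using length_x length_y p_less height_flip_le by auto
  then show ?thesis using assms \<open>\<not> y!q\<close> length_x length_y p_less
    by (auto simp: marked_iff unmatched_open_def)
qed

lemma marked_flip_open_after: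
  assumes "p < q" "q < n" "x!q"
  shows "q \<in> marked x \<longleftrightarrow> q \<in> marked y"
proof -
  have "y!q" using assms same_elsewhere[of q] by auto
  with assms have "unmatched_open x q \<longleftrightarrow> unmatched_open y q"
    unfolding unmatched_open_def using length_x length_y height_flip_gt by auto
  then show ?thesis using assms \<open>y!q\<close> length_x length_y
    by (auto simp: marked_iff unmatched_close_def)
qed

definition late_changes :: "nat set" where
  "late_changes = {q. p < q \<and> q < n \<and> \<not> x!q \<and> (q \<in> marked x) \<noteq> (q \<in> marked y)}"

definition early_changes :: "nat set" where
  "early_changes = {q. q < p \<and> x!q \<and> (q \<in> marked x) \<noteq> (q \<in> marked y)}"

lemma marking_change_cases:
  assumes "q < n" "q \<noteq> p" "(q \<in> marked x) \<noteq> (q \<in> marked y)"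
  shows "q \<in> late_changes \<or> q \<in> early_changes"
  using assms marked_flip_close_before marked_flip_open_after
  unfolding late_changes_def early_changes_def by (cases "q < p") auto

lemma late_changeD:
  assumes "q \<in> late_changes"
  shows "unmatched_close x q \<and> \<not> unmatched_close y q \<and> (\<exists>t\<le>p. height x t \<le> height x q + 1)"
proof -
  from assms have q: "p < q" "q < n" "\<not> x!q" "(q \<in> marked x) \<noteq> (q \<in> marked y)"
    by (auto simp: late_changes_def)
  then have "\<not> y!q" using same_elsewhere[of q] by auto
  with q have "unmatched_close x q \<noteq> unmatched_close y q"
    using length_x length_y by (auto simp: marked_iff unmatched_open_def)
  moreover have "unmatched_close x q" if "unmatched_close y q"
    using that q \<open>\<not> y!q\<close> length_x length_y height_flip_gt height_flip_le
    unfolding unmatched_close_def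
    by (smt (verit, ccfv_threshold) le_less_trans linorder_not_le order.strict_implies_order)
  ultimately have close_x: "unmatched_close x q" and not_close_y: "\<not> unmatched_close y q"
    by auto
  then obtain t where t: "t \<le> q" "height y t < height y q"
    using q \<open>\<not> y!q\<close> length_y by (auto simp: unmatched_close_def not_le)
  have "t \<le> p"
  proof (rule ccontr)
    assume "\<not> t \<le> p"
    then have "height x t < height x q" using t height_flip_gt q by simp
    then show False using close_x t by (auto simp: unmatched_close_def)
  qed
  then have "height x t \<le> height x q + 1"
    using t height_flip_le height_flip_gt q by simp
  with close_x not_close_y \<open>t \<le> p\<close> show ?thesis by blast
qed

lemma early_changeD:
  assumes "q \<in> early_changes"
  shows "unmatched_open y q \<and> \<not> unmatched_open x q \<and> (\<exists>t. p < t \<and> t \<le> n \<and> height x t \<le> height x q)"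
proof -
  from assms have q: "q < p" "x!q" "(q \<in> marked x) \<noteq> (q \<in> marked y)"
    by (auto simp: early_changes_def)
  then have "y!q" using same_elsewhere[of q] p_less by auto
  with q have "unmatched_open x q \<noteq> unmatched_open y q"
    using length_x length_y p_less by (auto simp: marked_iff unmatched_close_def)
  moreover have "unmatched_open y q" if "unmatched_open x q"
    using that q \<open>y!q\<close> length_x length_y height_flip height_flip_le
    unfolding unmatched_open_def by (smt (verit, best) less_imp_le_nat)
  ultimately have not_open_x: "\<not> unmatched_open x q" and open_y: "unmatched_open y q"
    by auto
  then obtain t where t: "q < t" "t \<le> n" "height x t \<le> height x q"
    using q \<open>y!q\<close> length_x p_less by (auto simp: unmatched_open_def not_less)
  have "p < t"
  proof (rule ccontr)
    assume "\<not> p < t"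
    then have "height y t \<le> height y q" using t height_flip_le q by simp
    then show False using open_y t length_y by (auto simp: unmatched_open_def)
  qed
  with not_open_x open_y t show ?thesis by blast
qed

lemma marked_eq_if_no_changes:
  assumes "p \<notin> marked x" "p \<notin> marked y" "late_changes = {}" "early_changes = {}"
  shows "marked x = marked y"
proof (rule set_eqI)
  fix q
  show "q \<in> marked x \<longleftrightarrow> q \<in> marked y"
  proof (cases "q < n")
    case True
    then show ?thesis using assms marking_change_cases[of q] by blast
  qed (use length_x length_y in \<open>auto dest: marked_less_length\<close>)
qed

definition min_before :: int where "min_before = Min (height x ` {..p})"

definition min_after :: int where "min_after = Min (height x ` {p<..n})"

lemma min_before_le: "t \<le> p \<Longrightarrow> min_before \<le> height x t"
  unfolding min_before_def by simp

lemma min_before_attained: "\<exists>t\<le>p. height x t = min_before"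
proof -
  have "min_before \<in> height x ` {..p}" unfolding min_before_def by (intro Min_in) auto
  then show ?thesis by auto
qed

lemma min_after_le: "p < t \<Longrightarrow> t \<le> n \<Longrightarrow> min_after \<le> height x t"
  unfolding min_after_def by simp

lemma min_after_attained: "\<exists>t. p < t \<and> t \<le> n \<and> height x t = min_after"
proof -
  have "min_after \<in> height x ` {p<..n}"
    unfolding min_after_def using p_less by (intro Min_in) auto
  then show ?thesis by auto
qed

text \<open>Heights are strictly decreasing along late changes and strictly increasing along early
  ones, and both are confined to short windows determined by the two minima.\<close>

lemma card_late_changes:
  "int (card late_changes) \<le> max 0 (min_before - max (min_before - 1) (min_after + 1) + 1)"
proof (rule card_le_of_inj_into_interval)
  have decreasing: "height x b < height x a"
    if "a \<in> late_changes" "b \<in> late_changes" "a < b" for a b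
  proof -
    have "unmatched_close x b" using that late_changeD by blast
    then have "height x b \<le> height x (Suc a)" using \<open>a < b\<close> by (simp add: unmatched_close_def)
    then show ?thesis using that(1) by (simp add: late_changes_def height_Suc_close)
  qed
  have "strict_antimono_on late_changes (height x)"
    using decreasing by (intro monotone_onI)
  then show "inj_on (height x) late_changes" by (simp add: strict_antimono_iff_antimono)
  obtain t0 where t0: "t0 \<le> p" "height x t0 = min_before" using min_before_attained by blast
  show "height x ` late_changes \<subseteq> {max (min_before - 1) (min_after + 1)..min_before}"
  proof clarify
    fix q assume late: "q \<in> late_changes"
    then have q: "p < q" "q < n" "\<not> x!q" by (simp_all add: late_changes_def)
    obtain t where "t \<le> p" "height x t \<le> height x q + 1"
      and below: "\<forall>s\<le>q. height x q \<le> height x s"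
      using late_changeD[OF late] by (auto simp: unmatched_close_def)
    have "t0 \<le> q" using t0(1) q(1) by simp
    then have "height x q \<le> min_before" using below t0(2) by auto
    moreover have "min_before - 1 \<le> height x q"
      using min_before_le[OF \<open>t \<le> p\<close>] \<open>height x t \<le> height x q + 1\<close> by simp
    moreover have "min_after \<le> height x (Suc q)" using q by (intro min_after_le) auto
    ultimately show "height x q \<in> {max (min_before - 1) (min_after + 1)..min_before}"
      using q(3) by (simp add: height_Suc_close)
  qed
qed

lemma card_early_changes:
  "int (card early_changes)
     \<le> max 0 (min (min_after + 1) (height x p - 1) - max min_after min_before + 1)"
proof (rule card_le_of_inj_into_interval)
  have increasing: "height x a < height x b"
    if "a \<in> early_changes" "b \<in> early_changes" "a < b" for a b
  proof -
    have "unmatched_open y a" using that early_changeD by blast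
    then have "height y a < height y b"
      using that p_less length_y unfolding early_changes_def unmatched_open_def by auto
    then show ?thesis using that height_flip_le unfolding early_changes_def by simp
  qed
  have "strict_mono_on early_changes (height x)"
    using increasing by (intro strict_mono_onI)
  then show "inj_on (height x) early_changes" by (rule strict_mono_on_imp_inj_on)
  obtain t1 where t1: "p < t1" "t1 \<le> n" "height x t1 = min_after" using min_after_attained by blast
  show "height x ` early_changes
      \<subseteq> {max min_after min_before..min (min_after + 1) (height x p - 1)}"
  proof clarify
    fix q assume early: "q \<in> early_changes"
    then have q: "q < p" "x!q" by (simp_all add: early_changes_def)
    obtain t where "p < t" "t \<le> n" "height x t \<le> height x q" and open_y: "unmatched_open y q"
      using early_changeD[OF early] by blast
    have "min_after \<le> height x q" using min_after_le[of t] \<open>p < t\<close> \<open>t \<le> n\<close> \<open>height x t \<le> height x q\<close> by simp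
    moreover have "min_before \<le> height x q" using q min_before_le by simp
    moreover have "height y q < height y t1" "height y q < height y p"
      using open_y t1 q p_less length_y by (auto simp: unmatched_open_def)
    ultimately show "height x q \<in> {max min_after min_before..min (min_after + 1) (height x p - 1)}"
      using q t1 height_flip_le height_flip_gt by simp
  qed
qed

lemma card_sig_diffs: "card (sig_diffs x y) \<le> 3"
proof -
  have "sig_diffs x y \<subseteq> insert p (late_changes \<union> early_changes)"
  proof
    fix q assume "q \<in> sig_diffs x y"
    then have "q < n" and "signature x ! q \<noteq> signature y ! q"
      by (auto simp: sig_diffs_def length_x)
    then show "q \<in> insert p (late_changes \<union> early_changes)"
    proof (cases "q = p")
      case False
      then have "x!q = y!q" using same_elsewhere \<open>q < n\<close> by simp
      with \<open>signature x ! q \<noteq> signature y ! q\<close> have "(q \<in> marked x) \<noteq> (q \<in> marked y)"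
        using \<open>q < n\<close> length_x length_y by (auto simp: nth_signature split: if_splits)
      then show ?thesis using marking_change_cases[OF \<open>q < n\<close> False] by blast
    qed simp
  qed
  moreover have finite: "finite late_changes" "finite early_changes"
    unfolding late_changes_def early_changes_def by auto
  ultimately have "card (sig_diffs x y) \<le> card (insert p (late_changes \<union> early_changes))"
    by (intro card_mono) auto
  also have "\<dots> \<le> Suc (card (late_changes \<union> early_changes))"
    using finite by (simp add: card_insert_if)
  also have "\<dots> \<le> Suc (card late_changes + card early_changes)"
    using card_Un_le by simp
  finally have "card (sig_diffs x y) \<le> Suc (card late_changes + card early_changes)" .
  moreover have "max 0 (min_before - max (min_before - 1) (min_after + 1) + 1)
      + max 0 (min (min_after + 1) (height x p - 1) - max min_after min_before + 1) \<le> 2"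
    by (smt (verit))
  ultimately show ?thesis using card_late_changes card_early_changes by linarith
qed

lemma marked_flip_last_unmatched_close:
  assumes close: "unmatched_close x p" and last: "\<And>q. p < q \<Longrightarrow> \<not> unmatched_close x q"
  shows "marked x = marked y"
proof (rule marked_eq_if_no_changes)
  have before_p: "\<And>s. s \<le> p \<Longrightarrow> height x p \<le> height x s"
    using close by (simp add: unmatched_close_def)
  have "unmatched_open y p"
    unfolding unmatched_open_def
    using height_after_last_unmatched_close[OF close last] y_p p_less length_x length_y
      height_flip_le[of p] height_flip_gt by force
  then show "p \<notin> marked y" by (simp add: marked_iff)
  show "p \<notin> marked x" using close by (simp add: marked_iff)
  show "late_changes = {}"
    using late_changeD last by (fastforce simp: late_changes_def)
  show "early_changes = {}"
  proof (rule ccontr)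
    assume "early_changes \<noteq> {}"
    then obtain q where q: "q \<in> early_changes" by blast
    then have "q < p" and "unmatched_open y q"
      using early_changeD[OF q] by (simp_all add: early_changes_def)
    then have "height y q < height y p" using p_less length_y by (simp add: unmatched_open_def)
    then show False using before_p[of q] \<open>q < p\<close> height_flip_le by simp
  qed
qed

text \<open>Otherwise the last t \<le> p with h(t) < h(p) would be an unmatched 1 of y before p.\<close>

lemma unmatched_close_of_first_unmatched_open:
  assumes open_p: "unmatched_open y p" and first: "\<And>q. q < p \<Longrightarrow> \<not> unmatched_open y q"
  shows "unmatched_close x p"
proof (rule ccontr)
  assume "\<not> unmatched_close x p"
  then have "{t. t \<le> p \<and> height x t < height x p} \<noteq> {}"
    using x_p p_less length_x by (auto simp: unmatched_close_def)
  moreover have fin: "finite {t. t \<le> p \<and> height x t < height x p}" by simp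
  define t where "t = Max {t. t \<le> p \<and> height x t < height x p}"
  ultimately have t: "t \<le> p" "height x t < height x p"
    using Max_in[OF fin] unfolding t_def by auto
  have last: "height x p \<le> height x s" if "t < s" "s \<le> p" for s
    using that Max_ge[OF fin, of s] unfolding t_def[symmetric] by force
  have "t < p" using t by (metis le_neq_implies_less less_irrefl)
  then have "height x p \<le> height x (Suc t)" using last[of "Suc t"] by simp
  then have "x!t" and height_t: "height x t = height x p - 1"
    using t by (auto simp: height_Suc split: if_splits)
  have "unmatched_open y t"
    unfolding unmatched_open_def
  proof (intro conjI allI impI)
    fix s assume s: "t < s \<and> s \<le> length y"
    show "height y t < height y s"
    proof (cases "s \<le> p")
      case True
      then show ?thesis using last[of s] s height_t \<open>t < p\<close> height_flip_le by simp
    next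
      case False
      with open_p s have "height y p < height y s" by (simp add: unmatched_open_def)
      then show ?thesis using False s height_t \<open>t < p\<close> height_flip_le by simp
    qed
  qed (use \<open>t < p\<close> p_less length_y \<open>x!t\<close> same_elsewhere[of t] in auto)
  then show False using first \<open>t < p\<close> by blast
qed

lemma marked_flip_first_unmatched_open:
  assumes open_p: "unmatched_open y p" and first: "\<And>q. q < p \<Longrightarrow> \<not> unmatched_open y q"
  shows "marked x = marked y"
proof (rule marked_eq_if_no_changes)
  show "p \<notin> marked x"
    using unmatched_close_of_first_unmatched_open[OF assms] by (simp add: marked_iff)
  show "p \<notin> marked y" using open_p by (simp add: marked_iff)
  show "early_changes = {}"
    using early_changeD first by (fastforce simp: early_changes_def)
  show "late_changes = {}"
  proof (rule ccontr)
    assume "late_changes \<noteq> {}"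
    then obtain q where late: "q \<in> late_changes" by blast
    then have q: "p < q" "q < n" "\<not> x!q" and "unmatched_close x q"
      using late_changeD[OF late] by (simp_all add: late_changes_def)
    then have "height x q \<le> height x (Suc p)" by (simp add: unmatched_close_def)
    moreover have "height y p < height y (Suc q)"
      using open_p q length_y by (simp add: unmatched_open_def)
    ultimately show False
      using q x_p height_flip_le[of p] height_flip_gt[of "Suc q"]
      by (simp add: height_Suc_close)
  qed
qed

end

subsection \<open>The chains\<close>

lemma weight_eq_card: "weight x = card {i. i < length x \<and> x!i}"
  unfolding weight_def by (simp add: length_filter_conv_card)

lemma mem_chain_iff:
  "c \<in> chain x \<longleftrightarrow> length c = length x \<and> marked c = marked x \<and> (\<forall>q\<in>marked x. c!q = x!q)"
proof
  assume c: "c \<in> chain x"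
  then have length_c: "length c = length x" and "signature c = signature x"
    by (auto simp: chain_def)
  then have sig: "(if q \<in> marked c then Some (c!q) else None)
      = (if q \<in> marked x then Some (x!q) else None)" if "q < length x" for q
    using that by (metis nth_signature)
  have "q \<in> marked c \<longleftrightarrow> q \<in> marked x" for q
  proof (cases "q < length x")
    case True
    then show ?thesis using sig[OF True] by (auto split: if_splits)
  qed (use length_c in \<open>auto dest: marked_less_length\<close>)
  then have "marked c = marked x" by blast
  moreover have "c!q = x!q" if "q \<in> marked x" for q
    using sig[OF marked_less_length[OF that]] that calculation by simp
  ultimately show "length c = length x \<and> marked c = marked x \<and> (\<forall>q\<in>marked x. c!q = x!q)"
    using length_c by simp
qed (auto simp: chain_def signature_def)

lemma chain_eq_if_mem: "y \<in> chain x \<Longrightarrow> chain y = chain x"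
  by (simp add: chain_def)

definition unmarked :: "bool list \<Rightarrow> nat set" where
  "unmarked x = {q. q < length x \<and> q \<notin> marked x}"

lemma finite_unmarked [simp]: "finite (unmarked x)"
  by (simp add: unmarked_def)

text \<open>Setting the last unmarked 0 to 1 (or the first unmarked 1 to 0) stays in the chain.\<close>

lemma exists_chain_member_heavier:
  "d \<le> card {q \<in> unmarked x. \<not> x!q} \<Longrightarrow> \<exists>c\<in>chain x. weight c = weight x + d"
proof (induction d arbitrary: x)
  case 0
  then show ?case by (auto simp: mem_chain_iff)
next
  case (Suc d)
  define Z where "Z = {q \<in> unmarked x. \<not> x!q}"
  have "finite Z" by (simp add: Z_def)
  then have "Z \<noteq> {}" using Suc.prems unfolding Z_def[symmetric] by auto
  define p where "p = Max Z"
  have "p \<in> Z" and last: "\<And>q. q \<in> Z \<Longrightarrow> q \<le> p"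
    using Max_in Max_ge \<open>finite Z\<close> \<open>Z \<noteq> {}\<close> unfolding p_def by auto
  then have p: "p < length x" "p \<notin> marked x" "\<not> x!p" by (auto simp: Z_def unmarked_def)
  define y where "y = x[p := True]"
  interpret bit_flip x y p "length x"
    using p by unfold_locales (auto simp: y_def)
  have "unmatched_close x p" using p by (simp add: unmatched_close_iff)
  moreover have "\<not> unmatched_close x q" if "p < q" for q
    using last[of q] that by (auto simp: Z_def unmarked_def unmatched_close_iff)
  ultimately have marked_y: "marked y = marked x"
    by (metis marked_flip_last_unmatched_close)
  then have "y \<in> chain x"
    using p marked_less_length by (auto simp: mem_chain_iff y_def nth_list_update)
  have "{q \<in> unmarked y. \<not> y!q} = Z - {p}"
    unfolding Z_def unmarked_def marked_y using p by (auto simp: y_def nth_list_update)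
  then have "d \<le> card {q \<in> unmarked y. \<not> y!q}"
    using Suc.prems \<open>p \<in> Z\<close> \<open>finite Z\<close> by (simp add: Z_def)
  then obtain c where "c \<in> chain x" "weight c = weight y + d"
    using Suc.IH chain_eq_if_mem[OF \<open>y \<in> chain x\<close>] by blast
  moreover have "{i. i < length y \<and> y!i} = insert p {i. i < length x \<and> x!i}"
    using p by (auto simp: y_def nth_list_update)
  then have "weight y = Suc (weight x)" using p by (simp add: weight_eq_card y_def)
  ultimately show ?case by auto
qed

lemma exists_chain_member_lighter:
  "d \<le> card {q \<in> unmarked x. x!q} \<Longrightarrow> \<exists>c\<in>chain x. weight c + d = weight x"
proof (induction d arbitrary: x)
  case 0
  then show ?case by (auto simp: mem_chain_iff)
next
  case (Suc d)
  define Z where "Z = {q \<in> unmarked x. x!q}"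
  have "finite Z" by (simp add: Z_def)
  then have "Z \<noteq> {}" using Suc.prems unfolding Z_def[symmetric] by auto
  define p where "p = Min Z"
  have "p \<in> Z" and first: "\<And>q. q \<in> Z \<Longrightarrow> p \<le> q"
    using Min_in Min_le \<open>finite Z\<close> \<open>Z \<noteq> {}\<close> unfolding p_def by auto
  then have p: "p < length x" "p \<notin> marked x" "x!p" by (auto simp: Z_def unmarked_def)
  define y where "y = x[p := False]"
  interpret bit_flip y x p "length x"
    using p by unfold_locales (auto simp: y_def)
  have "unmatched_open x p" using p by (simp add: unmatched_open_iff)
  moreover have "\<not> unmatched_open x q" if "q < p" for q
    using first[of q] that by (auto simp: Z_def unmarked_def unmatched_open_iff)
  ultimately have marked_y: "marked y = marked x"
    by (metis marked_flip_first_unmatched_open)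
  then have "y \<in> chain x"
    using p marked_less_length by (auto simp: mem_chain_iff y_def nth_list_update)
  have "{q \<in> unmarked y. y!q} = Z - {p}"
    unfolding Z_def unmarked_def marked_y using p by (auto simp: y_def nth_list_update)
  then have "d \<le> card {q \<in> unmarked y. y!q}"
    using Suc.prems \<open>p \<in> Z\<close> \<open>finite Z\<close> by (simp add: Z_def)
  then obtain c where "c \<in> chain x" "weight c + d = weight y"
    using Suc.IH chain_eq_if_mem[OF \<open>y \<in> chain x\<close>] by blast
  moreover have "{i. i < length x \<and> x!i} = insert p {i. i < length y \<and> y!i}"
    using p by (auto simp: y_def nth_list_update)
  then have "Suc (weight y) = weight x" using p by (simp add: weight_eq_card y_def)
  ultimately show ?case by (metis add_Suc_right)
qed

lemma chain_k_eq: "chain_k x = card {q \<in> marked x. x!q}"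
  unfolding chain_k_def using card_marked_eq[of x] by simp

lemma card_unmarked: "card (unmarked x) + 2 * chain_k x = length x"
proof -
  have "unmarked x \<union> marked x = {..<length x}" "unmarked x \<inter> marked x = {}"
    by (auto simp: unmarked_def dest: marked_less_length)
  then have "card (unmarked x) + card (marked x) = length x"
    by (metis card_Un_disjoint card_lessThan finite_unmarked finite_marked)
  then show ?thesis unfolding chain_k_def using card_marked_eq[of x] by simp
qed

lemma weight_chain_member:
  assumes "c \<in> chain x"
  shows "weight c = chain_k x + card {q \<in> unmarked x. c!q}"
proof -
  have "{i. i < length c \<and> c!i} = {q \<in> marked x. x!q} \<union> {q \<in> unmarked x. c!q}"
    using assms by (auto simp: mem_chain_iff unmarked_def dest: marked_less_length)
  moreover have "{q \<in> marked x. x!q} \<inter> {q \<in> unmarked x. c!q} = {}"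
    by (auto simp: unmarked_def)
  ultimately show ?thesis
    unfolding weight_eq_card chain_k_eq by (simp add: card_Un_disjoint)
qed

lemma chain_member_unmarked_mono:
  assumes "c \<in> chain x" "u \<in> unmarked x" "v \<in> unmarked x" "u < v" "c!u"
  shows "c!v"
proof -
  have "length c = length x" "marked c = marked x"
    using assms(1) by (simp_all add: mem_chain_iff)
  then show ?thesis
    using assms(2-5) unmarked_open_before_unmarked_open[of u v c] by (simp add: unmarked_def)
qed

text \<open>Upward closed subsets of a linear order are nested.\<close>

lemma card_filter_neq_upward_closed:
  fixes W :: "'a::linorder set"
  assumes "finite W"
    and f_up: "\<And>u v. u \<in> W \<Longrightarrow> v \<in> W \<Longrightarrow> u < v \<Longrightarrow> f u \<Longrightarrow> f v"
    and g_up: "\<And>u v. u \<in> W \<Longrightarrow> v \<in> W \<Longrightarrow> u < v \<Longrightarrow> g u \<Longrightarrow> g v"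
  shows "int (card {v \<in> W. f v \<noteq> g v}) = \<bar>int (card {v \<in> W. f v}) - int (card {v \<in> W. g v})\<bar>"
proof -
  have nested: "{v \<in> W. f v} \<subseteq> {v \<in> W. g v} \<or> {v \<in> W. g v} \<subseteq> {v \<in> W. f v}"
  proof (rule ccontr)
    assume "\<not> ?thesis"
    then obtain u v where "u \<in> W" "f u" "\<not> g u" "v \<in> W" "g v" "\<not> f v" by blast
    then show False using f_up[of u v] g_up[of v u] by (metis linorder_neqE)
  qed
  have "card {v \<in> W. f v \<noteq> g v} = card ({v \<in> W. f v} - {v \<in> W. g v}) + card ({v \<in> W. g v} - {v \<in> W. f v})"
  proof -
    have "{v \<in> W. f v \<noteq> g v} = ({v \<in> W. f v} - {v \<in> W. g v}) \<union> ({v \<in> W. g v} - {v \<in> W. f v})"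
      by auto
    then show ?thesis using \<open>finite W\<close> by (simp add: card_Un_disjoint disjoint_iff)
  qed
  with nested \<open>finite W\<close> show ?thesis by (auto simp: card_Diff_subset card_mono)
qed

lemma chain_member_eq_if_weight_eq:
  assumes "c \<in> chain x" "c' \<in> chain x" "weight c = weight c'"
  shows "c = c'"
proof -
  have "card {q \<in> unmarked x. c!q \<noteq> c'!q} = 0"
    using card_filter_neq_upward_closed[of "unmarked x" "\<lambda>q. c!q" "\<lambda>q. c'!q"]
      chain_member_unmarked_mono[OF assms(1)] chain_member_unmarked_mono[OF assms(2)]
      assms weight_chain_member by simp
  then have "c!q = c'!q" if "q \<in> unmarked x" for q
    using that by simp
  moreover have "c!q = c'!q" if "q \<in> marked x" for q
    using that assms(1,2) by (simp add: mem_chain_iff)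
  moreover have "length c = length x" "length c' = length x"
    using assms(1,2) by (simp_all add: mem_chain_iff)
  ultimately show "c = c'"
    by (intro nth_equalityI) (auto simp: unmarked_def)
qed

lemma chain_elem_mem_chain:
  assumes "chain_k x \<le> j" "j \<le> length x - chain_k x"
  shows "chain_elem x j \<in> chain x \<and> weight (chain_elem x j) = j"
proof -
  have "card {q \<in> unmarked x. \<not> x!q} + card {q \<in> unmarked x. x!q}
      = card ({q \<in> unmarked x. \<not> x!q} \<union> {q \<in> unmarked x. x!q})"
    by (rule card_Un_disjoint[symmetric]) auto
  also have "{q \<in> unmarked x. \<not> x!q} \<union> {q \<in> unmarked x. x!q} = unmarked x" by auto
  finally have "length x = card {q \<in> unmarked x. \<not> x!q} + card {q \<in> unmarked x. x!q} + 2 * chain_k x"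
    using card_unmarked[of x] by simp
  moreover have "weight x = chain_k x + card {q \<in> unmarked x. x!q}"
    by (rule weight_chain_member) (simp add: mem_chain_iff)
  ultimately obtain c where c: "c \<in> chain x" "weight c = j"
  proof (cases "weight x \<le> j")
    case True
    with assms \<open>length x = _\<close> \<open>weight x = _\<close>
    have "j - weight x \<le> card {q \<in> unmarked x. \<not> x!q}" by linarith
    then obtain c where "c \<in> chain x" "weight c = weight x + (j - weight x)"
      using exists_chain_member_heavier by blast
    then show ?thesis using that True by simp
  next
    case False
    with \<open>weight x = _\<close> have "weight x - j \<le> card {q \<in> unmarked x. x!q}" using assms by linarith
    then obtain c where "c \<in> chain x" "weight c + (weight x - j) = weight x"
      using exists_chain_member_lighter by blast
    then show ?thesis using that False by simp
  qed
  have "chain_elem x j = c"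
    unfolding chain_elem_def
  proof (rule the_equality)
    fix c' assume "c' \<in> chain x \<and> weight c' = j"
    then show "c' = c" using chain_member_eq_if_weight_eq[of c' x c] c by simp
  qed (use c in simp)
  then show ?thesis using c by simp
qed

subsection \<open>Neighbouring strings\<close>

lemma hdist_signature:
  "length x = length y \<Longrightarrow> hdist (signature x) (signature y) = card (sig_diffs x y)"
  unfolding hdist_def sig_diffs_def by (simp add: signature_def)

lemma sig_diffs_commute: "length x = length y \<Longrightarrow> sig_diffs x y = sig_diffs y x"
  unfolding sig_diffs_def by auto

lemma card_sig_diffs_le_3:
  assumes "length x = length y" "hdist x y = 1"
  shows "card (sig_diffs x y) \<le> 3"
proof -
  obtain p where p: "{i. i < length x \<and> i < length y \<and> x!i \<noteq> y!i} = {p}"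
    using assms(2) unfolding hdist_def by (rule card_1_singletonE)
  then have flip: "\<And>q. q < length x \<Longrightarrow> q \<noteq> p \<Longrightarrow> x!q = y!q"
    and "p < length x" "x!p \<noteq> y!p"
    using assms(1) by (auto simp: set_eq_iff)
  show ?thesis
  proof (cases "x!p")
    case True
    then interpret bit_flip y x p "length x"
      using assms(1) flip \<open>p < length x\<close> \<open>x!p \<noteq> y!p\<close> by unfold_locales auto
    show ?thesis using card_sig_diffs sig_diffs_commute assms(1) by simp
  next
    case False
    then interpret bit_flip x y p "length x"
      using assms(1) flip \<open>p < length x\<close> \<open>x!p \<noteq> y!p\<close> by unfold_locales auto
    show ?thesis using card_sig_diffs .
  qed
qed

lemma marked_subset_sig_diffs:
  assumes "length x = length y"
  shows "marked x \<subseteq> marked y \<union> sig_diffs x y"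
proof
  fix q assume "q \<in> marked x"
  moreover have "q < length x" using marked_less_length[OF \<open>q \<in> marked x\<close>] .
  ultimately show "q \<in> marked y \<union> sig_diffs x y"
    using assms by (auto simp: sig_diffs_def nth_signature)
qed

lemma chain_k_diff_le:
  assumes "length x = length y"
  shows "2 * \<bar>int (chain_k x) - int (chain_k y)\<bar> \<le> int (card (sig_diffs x y))"
proof -
  have "card (marked x) \<le> card (marked y) + card (sig_diffs x y)"
    if "length x = length y" for x y
  proof -
    have "card (marked x) \<le> card (marked y \<union> sig_diffs x y)"
      using marked_subset_sig_diffs[OF that] by (intro card_mono) (auto simp: sig_diffs_def)
    also have "\<dots> \<le> card (marked y) + card (sig_diffs x y)" by (rule card_Un_le)
    finally show ?thesis .
  qed
  from this[OF assms] this[OF assms[symmetric]] show ?thesis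
    using sig_diffs_commute[OF assms] card_marked_eq[of x] card_marked_eq[of y]
    unfolding chain_k_eq by (simp add: abs_if)
qed

lemma unmarked_diff_subset_sig_diffs:
  "length x = length y \<Longrightarrow> (unmarked x - unmarked y) \<union> (unmarked y - unmarked x) \<subseteq> sig_diffs x y"
  by (auto simp: unmarked_def sig_diffs_def nth_signature)

lemma chain_member_diffs_subset:
  assumes "length x = length y" "c \<in> chain x" "c' \<in> chain y"
  shows "{i. i < length c \<and> i < length c' \<and> c!i \<noteq> c'!i}
    \<subseteq> sig_diffs x y \<union> {q \<in> unmarked x \<inter> unmarked y. c!q \<noteq> c'!q}"
proof clarify
  fix q assume q: "q < length c" "c!q \<noteq> c'!q" and "q \<notin> sig_diffs x y"
  then have "signature x ! q = signature y ! q" "q < length x"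
    using assms by (auto simp: sig_diffs_def mem_chain_iff)
  moreover have "c!q = x!q" if "q \<in> marked x"
    using that assms(2) by (simp add: mem_chain_iff)
  moreover have "c'!q = y!q" if "q \<in> marked y"
    using that assms(3) by (simp add: mem_chain_iff)
  ultimately show "q \<in> unmarked x \<inter> unmarked y"
    using q assms(1) by (auto simp: unmarked_def nth_signature split: if_splits)
qed

text \<open>Off the at most three coordinates where the signatures differ, both chain members are
  of the form 0...01...1 on the common unmarked coordinates, so they differ there in as many
  places as their weights restricted to these coordinates.\<close>

lemma hdist_chain_members:
  assumes "length x = length y" "card (sig_diffs x y) \<le> 3" "c \<in> chain x" "c' \<in> chain y"
  shows "int (hdist c c') \<le> \<bar>int (weight c) - int (weight c')\<bar> + 6"
proof -
  define S where "S = sig_diffs x y"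
  define W where "W = unmarked x \<inter> unmarked y"
  have "finite S" by (simp add: S_def sig_diffs_def)
  have "hdist c c' \<le> card (S \<union> {q \<in> W. c!q \<noteq> c'!q})"
    unfolding hdist_def S_def W_def
    using chain_member_diffs_subset[OF assms(1,3,4)] by (intro card_mono) (auto simp: sig_diffs_def)
  also have "\<dots> \<le> card S + card {q \<in> W. c!q \<noteq> c'!q}" by (rule card_Un_le)
  finally have "hdist c c' \<le> card S + card {q \<in> W. c!q \<noteq> c'!q}" .
  moreover have "int (card {q \<in> W. c!q \<noteq> c'!q})
      = \<bar>int (card {q \<in> W. c!q}) - int (card {q \<in> W. c'!q})\<bar>"
  proof (rule card_filter_neq_upward_closed)
    show "finite W" by (simp add: W_def)
    show "c!v" if "u \<in> W" "v \<in> W" "u < v" "c!u" for u v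
      using chain_member_unmarked_mono[OF assms(3)] that unfolding W_def by blast
    show "c'!v" if "u \<in> W" "v \<in> W" "u < v" "c'!u" for u v
      using chain_member_unmarked_mono[OF assms(4)] that unfolding W_def by blast
  qed
  moreover have "card {q \<in> W. c!q} = card ({q \<in> unmarked x. c!q} \<inter> unmarked y)"
    and "card {q \<in> W. c'!q} = card ({q \<in> unmarked y. c'!q} \<inter> unmarked x)"
    by (rule arg_cong[where f = card], auto simp: W_def)+
  moreover have "weight c = chain_k x + card ({q \<in> unmarked x. c!q} \<inter> unmarked y)
      + card ({q \<in> unmarked x. c!q} - unmarked y)"
    using weight_chain_member[OF assms(3)] card_Int_Diff[of "{q \<in> unmarked x. c!q}" "unmarked y"]
    by simp
  moreover have "weight c' = chain_k y + card ({q \<in> unmarked y. c'!q} \<inter> unmarked x)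
      + card ({q \<in> unmarked y. c'!q} - unmarked x)"
    using weight_chain_member[OF assms(4)] card_Int_Diff[of "{q \<in> unmarked y. c'!q}" "unmarked x"]
    by simp
  moreover have "card ({q \<in> unmarked x. c!q} - unmarked y) \<le> card (unmarked x - unmarked y)"
    and "card ({q \<in> unmarked y. c'!q} - unmarked x) \<le> card (unmarked y - unmarked x)"
    by (rule card_mono; auto)+
  moreover have "card (unmarked x - unmarked y) + card (unmarked y - unmarked x)
      = card ((unmarked x - unmarked y) \<union> (unmarked y - unmarked x))"
    by (rule card_Un_disjoint[symmetric]) auto
  moreover have "\<dots> \<le> card S"
    using unmarked_diff_subset_sig_diffs[OF assms(1)] \<open>finite S\<close> unfolding S_def
    by (rule card_mono[rotated])
  moreover have "card (unmarked x \<inter> unmarked y) + card (unmarked x - unmarked y) + 2 * chain_k x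
      = card (unmarked x \<inter> unmarked y) + card (unmarked y - unmarked x) + 2 * chain_k y"
    using card_unmarked[of x] card_unmarked[of y] assms(1)
      card_Int_Diff[of "unmarked x" "unmarked y"] card_Int_Diff[of "unmarked y" "unmarked x"]
    by (simp add: Int_commute)
  ultimately show ?thesis using assms(2) unfolding S_def by linarith
qed

theorem mainTheorem2:
  fixes n :: nat and x y :: "bool list"
  assumes "length x = n" and "length y = n" and "hdist x y = 1"
  shows "hdist (signature x) (signature y) \<le> 3
    \<and> \<bar>int (chain_k x) - int (chain_k y)\<bar> \<le> 1
    \<and> (\<forall>j \<in> {chain_k x .. n - chain_k x}. \<forall>j' \<in> {chain_k y .. n - chain_k y}.
          int (hdist (chain_elem x j) (chain_elem y j')) \<le> \<bar>int j - int j'\<bar> + 6)"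
proof -
  have same_length: "length x = length y" using assms by simp
  have three: "card (sig_diffs x y) \<le> 3"
    using card_sig_diffs_le_3[OF same_length assms(3)] .
  have "\<bar>int (chain_k x) - int (chain_k y)\<bar> \<le> 1"
    using chain_k_diff_le[OF same_length] three by (auto simp: abs_if)
  moreover have "int (hdist (chain_elem x j) (chain_elem y j')) \<le> \<bar>int j - int j'\<bar> + 6"
    if "j \<in> {chain_k x .. n - chain_k x}" "j' \<in> {chain_k y .. n - chain_k y}" for j j'
  proof -
    have "chain_elem x j \<in> chain x" "weight (chain_elem x j) = j"
      and "chain_elem y j' \<in> chain y" "weight (chain_elem y j') = j'"
      using that assms chain_elem_mem_chain[of x j] chain_elem_mem_chain[of y j'] by auto
    then show ?thesis using hdist_chain_members[OF same_length three] by metis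
  qed
  ultimately show ?thesis
    using three hdist_signature[OF same_length] by auto
qed

end
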